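(* Let $a\le b<\infty$ and $\beta,\eta,\nu>0$ with $\eta^2<2\beta\nu$, and set $\mu=\eta/\nu$, $\sigma=2\beta/\nu$. Consider the problem $$\sup_f\ \int_a^\infty \mathbb{I}(x>b)f(x)\,dx\quad\text{s.t.}\quad \int_a^\infty f(x)dx=\beta,\ \ f(a)=f(a+)=\eta,\ \ f'_+(a)\ge-\nu,\ \ f\text{ convex on }[a,\infty),\ \ f\ge0\text{ on }[a,\infty),$$ over functions $f:[a,\infty)\to\mathbb{R}$, and denote its optimal value by $z^*=z^*(a,b)$. Then $$z^*=\begin{cases}\frac{\nu}{2}(\sigma-\mu^2) & \text{if }\mu\le b-a,\\ \frac{\nu}{2}\big[\sigma-2(b-a)\mu+(b-a)^2\big]&\text{if }\mu>b-a.\end{cases}$$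
   Context: $f(a+)$ denotes the right limit of $f$ at $a$ and $f'_+$ the right derivative. *)

theory Defs
  imports "HOL-Analysis.Analysis"
begin

definition feasible :: "real \<Rightarrow> real \<Rightarrow> real \<Rightarrow> real \<Rightarrow> (real \<Rightarrow> real) \<Rightarrow> bool" where
  "feasible a \<beta> \<eta> \<nu> f \<longleftrightarrow>
     (f has_integral \<beta>) {a..} \<and>
     f a = \<eta> \<and> (f \<longlongrightarrow> \<eta>) (at_right a) \<and>
     (\<exists>D. (f has_real_derivative D) (at a within {a..}) \<and> D \<ge> - \<nu>) \<and>
     convex_on {a..} f \<and>
     (\<forall>x\<ge>a. f x \<ge> 0)"

definition objective :: "real \<Rightarrow> real \<Rightarrow> (real \<Rightarrow> real) \<Rightarrow> real" where
  "objective a b f = integral {a..} (\<lambda>x. if x > b then f x else 0)"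

end

theory Submission
  imports Defs
begin

(* Upper bound: a convex f with f(a) = eta and f'_+(a) >= -nu lies above the line
   eta - nu (x - a); together with f >= 0 this gives  int_a^b f >= eta t - nu t^2/2  for every
   t in [0, b - a], which is largest at t = min mu (b - a), and the objective is beta - int_a^b f.
   Lower bound: follow that line up to a + t and then a flatter line down to 0, its slope chosen
   so that the total mass is beta (possible because eta^2 < 2 beta nu).  This loses at most
   (eta - nu t)(b - a - t) against the bound, which is 0 for t = b - a < mu and tends to 0 as
   t increases to mu <= b - a. *)

lemma has_integral_affine:
  fixes c d u w :: real
  assumes "u \<le> w"
  shows "((\<lambda>x. c - d * (x - u)) has_integral c * (w - u) - d * (w - u)\<^sup>2 / 2) {u..w}"
proof -
  have "((\<lambda>x. c - d * (x - u)) has_integral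
        (c * (w - u) - d * (w - u)\<^sup>2 / 2) - (c * (u - u) - d * (u - u)\<^sup>2 / 2)) {u..w}"
    by (rule fundamental_theorem_of_calculus[OF assms])
       (auto intro!: derivative_eq_intros simp flip: has_real_derivative_iff_has_vector_derivative)
  then show ?thesis by simp
qed

lemma convex_on_max:
  assumes "convex_on S f" "convex_on S g"
  shows "convex_on S (\<lambda>x. max (f x) (g x))"
  using assms unfolding convex_on_def by (smt (verit) mult_left_mono)

lemma convex_on_affine:
  fixes c d e :: real
  assumes "convex S"
  shows "convex_on S (\<lambda>x. c - d * (x - e))"
  using assms by (intro convex_onI) (auto simp: algebra_simps)

lemma convex_on_right_tangent_le:
  fixes f :: "real \<Rightarrow> real"
  assumes cvx: "convex_on {a..} f" and deriv: "(f has_real_derivative D) (at a within {a..})"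
    and "a \<le> y"
  shows "f a + D * (y - a) \<le> f y"
proof (cases "y = a")
  case False
  with \<open>a \<le> y\<close> have "a < y" by simp
  have "((\<lambda>t. (f t - f a) / (t - a)) \<longlongrightarrow> D) (at a within {a..})"
    using deriv by (simp add: has_field_derivative_iff)
  moreover have "\<forall>\<^sub>F t in at a within {a..}. (f t - f a) / (t - a) \<le> (f y - f a) / (y - a)"
  proof -
    have "\<forall>\<^sub>F t in at a within {a..}. a < t \<and> t < y"
      using \<open>a < y\<close> by (auto simp: eventually_at dist_real_def intro!: exI[of _ "y - a"])
    then show ?thesis
    proof (rule eventually_mono)
      fix t assume "a < t \<and> t < y"
      then have "(f a - f t) / (a - t) \<le> (f a - f y) / (a - y)"
        using convex_on_slope_le(1)[OF cvx] by auto
      then show "(f t - f a) / (t - a) \<le> (f y - f a) / (y - a)"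
        using minus_divide_divide[of "f t - f a" "t - a"] minus_divide_divide[of "f y - f a" "y - a"] by simp
    qed
  qed
  ultimately have "D \<le> (f y - f a) / (y - a)"
    by (rule tendsto_upperbound) (simp add: at_within_Ici_at_right)
  then show ?thesis using \<open>a < y\<close> by (simp add: field_simps)
qed simp

lemma has_integral_tail:
  fixes f :: "real \<Rightarrow> real"
  assumes int: "(f has_integral I) {a..}" and nonneg: "\<And>x. a \<le> x \<Longrightarrow> 0 \<le> f x" and "a \<le> b"
  shows "f integrable_on {a..b}"
    and "((\<lambda>x. if b < x then f x else 0) has_integral I - integral {a..b} f) {a..}"
proof -
  have "f absolutely_integrable_on {a..}"
    using int nonneg by (intro nonnegative_absolutely_integrable_1) auto
  then have "f absolutely_integrable_on {a..b}"
    by (rule absolutely_integrable_on_subinterval) auto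
  then show fi: "f integrable_on {a..b}"
    using set_lebesgue_integral_eq_integral(1) by blast
  have "((\<lambda>x. if x \<in> {a..b} then f x else 0) has_integral integral {a..b} f) {a..}"
    using fi by (subst has_integral_restrict) auto
  from has_integral_diff[OF int this]
  show "((\<lambda>x. if b < x then f x else 0) has_integral I - integral {a..b} f) {a..}"
    by (rule has_integral_cong[THEN iffD1, rotated]) (use \<open>a \<le> b\<close> in auto)
qed

lemma SUP_ereal_eqI:
  fixes g :: "'a \<Rightarrow> real"
  assumes "\<And>x. x \<in> A \<Longrightarrow> g x \<le> v"
    and "\<And>e. 0 < e \<Longrightarrow> \<exists>x\<in>A. v - e \<le> g x"
  shows "(SUP x\<in>A. ereal (g x)) = ereal v"
proof (rule antisym)
  show "(SUP x\<in>A. ereal (g x)) \<le> ereal v"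
    using assms(1) by (simp add: SUP_least)
  show "ereal v \<le> (SUP x\<in>A. ereal (g x))"
  proof (rule ereal_le_epsilon2)
    fix e :: real assume "0 < e"
    then obtain x where "x \<in> A" "v - e \<le> g x" using assms(2) by blast
    then have "ereal v \<le> ereal (g x) + ereal e" by simp
    also have "\<dots> \<le> (SUP x\<in>A. ereal (g x)) + ereal e"
      using \<open>x \<in> A\<close> by (intro add_right_mono SUP_upper)
    finally show "ereal v \<le> (SUP x\<in>A. ereal (g x)) + ereal e" .
  qed
qed

lemma feasible_objective_eq:
  assumes "feasible a \<beta> \<eta> \<nu> f" and "a \<le> b"
  shows "f integrable_on {a..b}" and "objective a b f = \<beta> - integral {a..b} f"
  using has_integral_tail[of f \<beta> a b] assms
  by (auto simp: feasible_def objective_def intro: integral_unique)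

lemma feasible_ge_tangent:
  assumes "feasible a \<beta> \<eta> \<nu> f" and "a \<le> x"
  shows "\<eta> - \<nu> * (x - a) \<le> f x"
proof -
  obtain D where D: "(f has_real_derivative D) (at a within {a..})" "- \<nu> \<le> D"
    and cvx: "convex_on {a..} f" and "f a = \<eta>"
    using assms(1) by (auto simp: feasible_def)
  have "- \<nu> * (x - a) \<le> D * (x - a)"
    using D(2) \<open>a \<le> x\<close> by (intro mult_right_mono) auto
  with convex_on_right_tangent_le[OF cvx D(1) \<open>a \<le> x\<close>] \<open>f a = \<eta>\<close> show ?thesis
    by simp
qed

lemma objective_le:
  assumes fe: "feasible a \<beta> \<eta> \<nu> f" and "a \<le> b" and "0 \<le> t" and "t \<le> b - a"
  shows "objective a b f \<le> \<beta> - (\<eta> * t - \<nu> * t\<^sup>2 / 2)"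
proof -
  define p where "p = a + t"
  have "a \<le> p" "p \<le> b" using assms by (auto simp: p_def)
  have fi: "f integrable_on {a..b}" and obj: "objective a b f = \<beta> - integral {a..b} f"
    using feasible_objective_eq[OF fe \<open>a \<le> b\<close>] by auto
  have "\<eta> * t - \<nu> * t\<^sup>2 / 2 \<le> integral {a..p} f"
  proof (rule has_integral_le)
    show "((\<lambda>x. \<eta> - \<nu> * (x - a)) has_integral \<eta> * t - \<nu> * t\<^sup>2 / 2) {a..p}"
      using has_integral_affine[OF \<open>a \<le> p\<close>] by (simp add: p_def)
    show "(f has_integral integral {a..p} f) {a..p}"
      using fi \<open>p \<le> b\<close> by (intro integrable_integral integrable_on_subinterval[OF fi]) auto
    show "\<eta> - \<nu> * (x - a) \<le> f x" if "x \<in> {a..p}" for x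
      using feasible_ge_tangent[OF fe] that by simp
  qed
  moreover have "0 \<le> integral {p..b} f"
    using fe \<open>a \<le> p\<close> integrable_on_subinterval[OF fi, of p b]
    by (intro integral_nonneg) (auto simp: feasible_def)
  moreover have "integral {a..p} f + integral {p..b} f = integral {a..b} f"
    using Henstock_Kurzweil_Integration.integral_combine[OF \<open>a \<le> p\<close> \<open>p \<le> b\<close> fi] .
  ultimately show ?thesis using obj by linarith
qed

locale two_slope_ramp =
  fixes a \<eta> \<nu> p s :: real
  assumes a_le_kink: "a \<le> p" and slope_pos: "0 < s" and slope_less: "s < \<nu>"
    and kink_height_pos: "0 < \<eta> - \<nu> * (p - a)"
begin

definition kink_height :: real where "kink_height = \<eta> - \<nu> * (p - a)"

definition ramp_end :: real where "ramp_end = p + kink_height / s"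

definition ramp :: "real \<Rightarrow> real" where
  "ramp x = max (\<eta> - \<nu> * (x - a)) (max (kink_height - s * (x - p)) 0)"

definition ramp_mass :: real where
  "ramp_mass = \<eta> * (p - a) - \<nu> * (p - a)\<^sup>2 / 2 + kink_height\<^sup>2 / (2 * s)"

lemma kink_le_ramp_end: "p \<le> ramp_end"
  using kink_height_pos slope_pos by (simp add: ramp_end_def kink_height_def)

lemma steep_slope_pos: "0 < \<nu>"
  using slope_pos slope_less by simp

lemma ramp_left:
  assumes "x \<le> p"
  shows "ramp x = \<eta> - \<nu> * (x - a)"
proof -
  have "kink_height - s * (x - p) \<le> \<eta> - \<nu> * (x - a)"
    using mult_right_mono[of s \<nu> "p - x"] slope_less assms
    by (simp add: kink_height_def algebra_simps)
  moreover have "0 \<le> \<eta> - \<nu> * (x - a)"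
    using mult_left_mono[OF assms less_imp_le[OF steep_slope_pos]] kink_height_pos
    by (simp add: algebra_simps)
  ultimately show ?thesis by (simp add: ramp_def)
qed

lemma ramp_middle:
  assumes "p \<le> x" and "x \<le> ramp_end"
  shows "ramp x = kink_height - s * (x - p)"
proof -
  have "\<eta> - \<nu> * (x - a) \<le> kink_height - s * (x - p)"
    using mult_right_mono[of s \<nu> "x - p"] slope_less assms
    by (simp add: kink_height_def algebra_simps)
  moreover have "0 \<le> kink_height - s * (x - p)"
    using mult_left_mono[of x ramp_end s] slope_pos assms
    by (simp add: ramp_end_def algebra_simps)
  ultimately show ?thesis by (simp add: ramp_def)
qed

lemma ramp_right:
  assumes "ramp_end \<le> x"
  shows "ramp x = 0"
proof -
  have "p \<le> x" using kink_le_ramp_end assms by simp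
  have "kink_height - s * (x - p) \<le> 0"
    using mult_left_mono[of ramp_end x s] slope_pos assms
    by (simp add: ramp_end_def algebra_simps)
  moreover have "\<eta> - \<nu> * (x - a) \<le> kink_height - s * (x - p)"
    using mult_right_mono[of s \<nu> "x - p"] slope_less \<open>p \<le> x\<close>
    by (simp add: kink_height_def algebra_simps)
  ultimately show ?thesis by (simp add: ramp_def)
qed

lemma ramp_le_kink_height:
  assumes "p \<le> x"
  shows "ramp x \<le> kink_height"
  unfolding ramp_def
proof (intro max.boundedI)
  show "\<eta> - \<nu> * (x - a) \<le> kink_height"
    using mult_left_mono[OF assms, of \<nu>] steep_slope_pos by (simp add: kink_height_def algebra_simps)
  show "kink_height - s * (x - p) \<le> kink_height"
    using mult_left_mono[OF assms, of s] slope_pos by (simp add: algebra_simps)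
  show "0 \<le> kink_height"
    using kink_height_pos by (simp add: kink_height_def)
qed

lemma has_integral_ramp: "(ramp has_integral ramp_mass) {a..}"
proof -
  have steep: "(ramp has_integral \<eta> * (p - a) - \<nu> * (p - a)\<^sup>2 / 2) {a..p}"
    using has_integral_affine[OF a_le_kink, of \<eta> \<nu>]
    by (rule has_integral_cong[THEN iffD1, rotated]) (simp add: ramp_left)
  have "(ramp has_integral kink_height * (ramp_end - p) - s * (ramp_end - p)\<^sup>2 / 2) {p..ramp_end}"
    using has_integral_affine[OF kink_le_ramp_end, of kink_height s]
    by (rule has_integral_cong[THEN iffD1, rotated]) (simp add: ramp_middle)
  moreover have "kink_height * (ramp_end - p) - s * (ramp_end - p)\<^sup>2 / 2 = kink_height\<^sup>2 / (2 * s)"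
    using slope_pos by (simp add: ramp_end_def power2_eq_square field_simps)
  ultimately have "(ramp has_integral ramp_mass) {a..ramp_end}"
    using has_integral_combine[OF a_le_kink kink_le_ramp_end steep] by (simp add: ramp_mass_def)
  then have "((\<lambda>x. if x \<in> {a..ramp_end} then ramp x else 0) has_integral ramp_mass) {a..}"
    by (subst has_integral_restrict) auto
  then show ?thesis
    by (rule has_integral_cong[THEN iffD1, rotated]) (auto simp: ramp_right)
qed

lemma ramp_right_derivative:
  "\<exists>D. (ramp has_real_derivative D) (at a within {a..}) \<and> - \<nu> \<le> D"
proof (cases "a = p")
  case True
  have "((\<lambda>x. kink_height - s * (x - p)) has_real_derivative - s) (at a within {a..})"
    by (auto intro!: derivative_eq_intros)
  then have "(ramp has_real_derivative - s) (at a within {a..})"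
  proof (rule has_field_derivative_transform_within)
    show "0 < ramp_end - p"
      using slope_pos kink_height_pos by (simp add: ramp_end_def kink_height_def)
    fix x assume "x \<in> {a..}" and "dist x a < ramp_end - p"
    then have "p \<le> x" and "x \<le> ramp_end" using True by (auto simp: dist_real_def)
    then show "kink_height - s * (x - p) = ramp x" by (simp add: ramp_middle)
  qed simp
  then show ?thesis using slope_less by auto
next
  case False
  have "((\<lambda>x. \<eta> - \<nu> * (x - a)) has_real_derivative - \<nu>) (at a within {a..})"
    by (auto intro!: derivative_eq_intros)
  then have "(ramp has_real_derivative - \<nu>) (at a within {a..})"
  proof (rule has_field_derivative_transform_within)
    show "0 < p - a" using False a_le_kink by simp
  qed (auto simp: dist_real_def ramp_left)
  then show ?thesis by auto
qed

lemma feasible_ramp: "feasible a ramp_mass \<eta> \<nu> ramp"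
  unfolding feasible_def
proof (intro conjI allI impI)
  show "(ramp has_integral ramp_mass) {a..}" by (rule has_integral_ramp)
  show "ramp a = \<eta>" using ramp_left[OF a_le_kink] by simp
  have "isCont ramp a" unfolding ramp_def by (intro continuous_intros)
  with \<open>ramp a = \<eta>\<close> show "(ramp \<longlongrightarrow> \<eta>) (at_right a)"
    by (metis continuous_at_split continuous_within)
  show "\<exists>D. (ramp has_real_derivative D) (at a within {a..}) \<and> - \<nu> \<le> D"
    by (rule ramp_right_derivative)
  show "convex_on {a..} ramp"
    unfolding ramp_def by (intro convex_on_max convex_on_affine) (auto simp: convex_on_const)
  show "0 \<le> ramp x" for x by (simp add: ramp_def)
qed

lemma objective_ramp_ge:
  assumes "p \<le> b"
  shows "ramp_mass - (\<eta> * (p - a) - \<nu> * (p - a)\<^sup>2 / 2) - kink_height * (b - p) \<le> objective a b ramp"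
proof -
  have "a \<le> b" using a_le_kink assms by simp
  note fi = feasible_objective_eq(1)[OF feasible_ramp \<open>a \<le> b\<close>]
  have "integral {a..p} ramp = \<eta> * (p - a) - \<nu> * (p - a)\<^sup>2 / 2"
    using has_integral_affine[OF a_le_kink, of \<eta> \<nu>]
    by (intro integral_unique, rule has_integral_cong[THEN iffD1, rotated]) (simp add: ramp_left)
  moreover have "integral {p..b} ramp \<le> integral {p..b} (\<lambda>x. kink_height)"
    using ramp_le_kink_height integrable_on_subinterval[OF fi, of p b] a_le_kink
    by (intro integral_le) auto
  moreover have "integral {a..p} ramp + integral {p..b} ramp = integral {a..b} ramp"
    using Henstock_Kurzweil_Integration.integral_combine[OF a_le_kink assms fi] .
  ultimately show ?thesis
    using feasible_objective_eq(2)[OF feasible_ramp \<open>a \<le> b\<close>] assms by (simp add: algebra_simps)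
qed

end

lemma exists_feasible_objective_ge:
  assumes "0 < \<nu>" and "\<eta>\<^sup>2 < 2 * \<beta> * \<nu>"
    and "0 \<le> t" and "t \<le> b - a" and "\<nu> * t < \<eta>"
  shows "\<exists>f. feasible a \<beta> \<eta> \<nu> f \<and>
           \<beta> - (\<eta> * t - \<nu> * t\<^sup>2 / 2) - (\<eta> - \<nu> * t) * (b - a - t) \<le> objective a b f"
proof -
  define v where "v = \<eta> - \<nu> * t"
  define R where "R = \<beta> - (\<eta> * t - \<nu> * t\<^sup>2 / 2)"
  have "0 < v" using assms by (simp add: v_def)
  have "v\<^sup>2 < 2 * \<nu> * R"
    using assms(2) by (simp add: v_def R_def power2_eq_square algebra_simps)
  moreover have "0 < v\<^sup>2" using \<open>0 < v\<close> by simp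
  ultimately have "0 < R" using \<open>0 < \<nu>\<close> by (smt (verit) mult_pos_pos zero_less_mult_pos)
  \<comment> \<open>the triangle of height v and slope s beyond the kink then carries the remaining mass R\<close>
  define s where "s = v\<^sup>2 / (2 * R)"
  interpret two_slope_ramp a \<eta> \<nu> "a + t" s
  proof
    show "0 < s" using \<open>0 < v\<^sup>2\<close> \<open>0 < R\<close> by (simp add: s_def)
    show "s < \<nu>" using \<open>v\<^sup>2 < 2 * \<nu> * R\<close> \<open>0 < R\<close> by (simp add: s_def divide_less_eq algebra_simps)
  qed (use assms \<open>0 < v\<close> in \<open>simp_all add: v_def\<close>)
  have "kink_height = v" by (simp add: kink_height_def v_def)
  have "v\<^sup>2 / (2 * s) = R" using \<open>0 < v\<^sup>2\<close> \<open>0 < R\<close> by (simp add: s_def)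
  then have "ramp_mass = \<beta>"
    unfolding ramp_mass_def \<open>kink_height = v\<close> by (simp add: R_def)
  have "a + t \<le> b" using assms by simp
  from objective_ramp_ge[OF this]
  have "\<beta> - (\<eta> * t - \<nu> * t\<^sup>2 / 2) - (\<eta> - \<nu> * t) * (b - a - t) \<le> objective a b ramp"
    unfolding \<open>ramp_mass = \<beta>\<close> \<open>kink_height = v\<close> by (simp add: v_def diff_diff_eq)
  with feasible_ramp \<open>ramp_mass = \<beta>\<close> show ?thesis by auto
qed

lemma exists_feasible_objective_near_bound:
  assumes "a \<le> b" and "0 < \<eta>" and "0 < \<nu>" and "\<eta>\<^sup>2 < 2 * \<beta> * \<nu>" and "0 < e"
  defines "t \<equiv> min (\<eta> / \<nu>) (b - a)"
  shows "\<exists>f. feasible a \<beta> \<eta> \<nu> f \<and> \<beta> - (\<eta> * t - \<nu> * t\<^sup>2 / 2) - e \<le> objective a b f"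
proof (cases "\<eta> / \<nu> \<le> b - a")
  case False
  then have "t = b - a" and "\<nu> * (b - a) < \<eta>"
    using \<open>0 < \<nu>\<close> by (auto simp: t_def not_le pos_less_divide_eq mult.commute)
  with exists_feasible_objective_ge[OF \<open>0 < \<nu>\<close> assms(4), of "b - a" b a] \<open>a \<le> b\<close> \<open>0 < e\<close>
  show ?thesis by force
next
  case True
  define \<mu> where "\<mu> = \<eta> / \<nu>"
  have "t = \<mu>" and "\<eta> = \<nu> * \<mu>" and "0 < \<mu>" and "\<mu> \<le> b - a"
    using True \<open>0 < \<eta>\<close> \<open>0 < \<nu>\<close> by (auto simp: t_def \<mu>_def)
  define \<delta> where "\<delta> = min \<mu> (e / (\<nu> * (b - a)))"
  have "0 < \<delta>" and "\<delta> \<le> \<mu>"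
    using \<open>0 < \<mu>\<close> \<open>\<mu> \<le> b - a\<close> \<open>0 < \<nu>\<close> \<open>0 < e\<close> by (auto simp: \<delta>_def)
  have "\<delta> \<le> e / (\<nu> * (b - a))" by (simp add: \<delta>_def)
  then have "\<nu> * \<delta> * (b - a) \<le> e"
    using \<open>0 < \<mu>\<close> \<open>\<mu> \<le> b - a\<close> \<open>0 < \<nu>\<close> by (simp add: le_divide_eq mult.commute mult.left_commute)
  obtain f where "feasible a \<beta> \<eta> \<nu> f" and objective_f:
    "\<beta> - (\<eta> * (\<mu> - \<delta>) - \<nu> * (\<mu> - \<delta>)\<^sup>2 / 2) - (\<eta> - \<nu> * (\<mu> - \<delta>)) * (b - a - (\<mu> - \<delta>))
       \<le> objective a b f"
    using exists_feasible_objective_ge[OF \<open>0 < \<nu>\<close> assms(4), of "\<mu> - \<delta>" b a]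
      \<open>0 < \<delta>\<close> \<open>\<delta> \<le> \<mu>\<close> \<open>\<mu> \<le> b - a\<close> \<open>0 < \<nu>\<close> \<open>\<eta> = \<nu> * \<mu>\<close> by auto
  have "\<nu> * \<delta>\<^sup>2 / 2 \<le> \<nu> * \<delta> * \<mu>"
    using \<open>0 < \<delta>\<close> \<open>\<delta> \<le> \<mu>\<close> \<open>0 < \<nu>\<close> by (simp add: power2_eq_square)
  then have "\<beta> - (\<eta> * t - \<nu> * t\<^sup>2 / 2) - \<nu> * \<delta> * (b - a) \<le>
      \<beta> - (\<eta> * (\<mu> - \<delta>) - \<nu> * (\<mu> - \<delta>)\<^sup>2 / 2) - (\<eta> - \<nu> * (\<mu> - \<delta>)) * (b - a - (\<mu> - \<delta>))"
    unfolding \<open>t = \<mu>\<close> \<open>\<eta> = \<nu> * \<mu>\<close> by (simp add: power2_eq_square field_simps)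
  with objective_f \<open>\<nu> * \<delta> * (b - a) \<le> e\<close> \<open>feasible a \<beta> \<eta> \<nu> f\<close> show ?thesis by force
qed

theorem theorem3:
  fixes a b \<beta> \<eta> \<nu> \<mu> \<sigma> :: real
  assumes "a \<le> b" and "\<beta> > 0" and "\<eta> > 0" and "\<nu> > 0"
    and "\<eta>\<^sup>2 < 2 * \<beta> * \<nu>"
    and "\<mu> = \<eta> / \<nu>" and "\<sigma> = 2 * \<beta> / \<nu>"
  shows "(SUP f \<in> {f. feasible a \<beta> \<eta> \<nu> f}. ereal (objective a b f)) =
         ereal (if \<mu> \<le> b - a then \<nu> / 2 * (\<sigma> - \<mu>\<^sup>2)
                else \<nu> / 2 * (\<sigma> - 2 * (b - a) * \<mu> + (b - a)\<^sup>2))"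
proof -
  define t where "t = min (\<eta> / \<nu>) (b - a)"
  have "(if \<mu> \<le> b - a then \<nu> / 2 * (\<sigma> - \<mu>\<^sup>2) else \<nu> / 2 * (\<sigma> - 2 * (b - a) * \<mu> + (b - a)\<^sup>2))
        = \<beta> - (\<eta> * t - \<nu> * t\<^sup>2 / 2)"
    using \<open>\<nu> > 0\<close> unfolding assms(6,7) t_def by (simp add: min_def power2_eq_square field_simps)
  moreover have "(SUP f \<in> {f. feasible a \<beta> \<eta> \<nu> f}. ereal (objective a b f))
      = ereal (\<beta> - (\<eta> * t - \<nu> * t\<^sup>2 / 2))"
  proof (rule SUP_ereal_eqI)
    show "objective a b f \<le> \<beta> - (\<eta> * t - \<nu> * t\<^sup>2 / 2)" if "f \<in> {f. feasible a \<beta> \<eta> \<nu> f}" for f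
      using that objective_le[of a \<beta> \<eta> \<nu> f b t] assms(1,3,4) by (simp add: t_def)
    show "\<exists>f\<in>{f. feasible a \<beta> \<eta> \<nu> f}. \<beta> - (\<eta> * t - \<nu> * t\<^sup>2 / 2) - e \<le> objective a b f"
      if "0 < e" for e
      using exists_feasible_objective_near_bound[OF assms(1,3,4,5) that] by (simp add: t_def)
  qed
  ultimately show ?thesis by simp
qed

end
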